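(* Let $G=(B\cup W,E)$ be a bipartite graph that admits a BW-automorphism. Then, as an instance of Bipartite Influence, $G=0$; in particular $Ls(G)=Rs(G)=0$.
   Context: Bipartite Influence: played on a bipartite graph $G=(B\cup W,E)$ with black vertices $B$ and white vertices $W$, edges between $B$ and $W$. Isolated vertices are credited to the owner of their colour (black to Left, white to Right). On her turn Left picks a black vertex $x$ and removes $x$, its neighbours, and the vertices that thereby become isolated (credited to her); Right does the same with white vertices. Score = Left's removed/credited vertices minus Right's. $Ls(G)$, $Rs(G)$ are the optimal scores when Left, resp. Right, moves first. The disjoint union of positions is their disjunctive sum; $G=0$ means $Ls(G+H)=Ls(H)$ and $Rs(G+H)=Rs(H)$ for every Bipartite Influence position (more generally every dicotic nonzugzwang scoring game) $H$. A BW-automorphism of $G$ is a graph automorphism $\varphi$ of $G$ that is involutive ($\varphi(\varphi(u))=u$ for all $u$), maps black vertices to white vertices and white to black, and satisfies $d(v,\varphi(v))\geq 3$ for every vertex $v$, where $d$ is the shortest-path distance ($d=\infty$ between different connected components). *)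

theory Defs
  imports Main
begin

text \<open>A Bipartite Influence position: a finite vertex set V, a colouring
  c (c v = True means v is black, False means white) and an edge relation E.
  Only edges between vertices of V matter.\<close>

definition bipartite_graph :: "'a set \<Rightarrow> ('a \<Rightarrow> bool) \<Rightarrow> ('a \<Rightarrow> 'a \<Rightarrow> bool) \<Rightarrow> bool" where
  "bipartite_graph V c E \<longleftrightarrow> finite V \<and>
     (\<forall>u\<in>V. \<forall>v\<in>V. E u v \<longleftrightarrow> E v u) \<and>
     (\<forall>u\<in>V. \<forall>v\<in>V. E u v \<longrightarrow> c u \<noteq> c v)"

definition cnbhd :: "('a \<Rightarrow> 'a \<Rightarrow> bool) \<Rightarrow> 'a set \<Rightarrow> 'a \<Rightarrow> 'a set" where
  "cnbhd E U x = insert x {y\<in>U. E x y}"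

definition iso :: "('a \<Rightarrow> 'a \<Rightarrow> bool) \<Rightarrow> 'a set \<Rightarrow> 'a set" where
  "iso E U = {v\<in>U. \<not> (\<exists>w\<in>U. E v w)}"

text \<open>Credit of a set of isolated vertices: black ones to Left (+1),
  white ones to Right (-1).\<close>
definition credit :: "('a \<Rightarrow> bool) \<Rightarrow> 'a set \<Rightarrow> int" where
  "credit c S = int (card {v\<in>S. c v}) - int (card {v\<in>S. \<not> c v})"

text \<open>Optimal score (Left minus Right) of the position V, with Left to
  move if the flag is True, Right otherwise. The first argument is fuel;
  it is always at least the number of vertices (see Ls/Rs).
  Isolated vertices are first credited to the owner of their colour; then
  the player to move chooses a vertex x of her colour, removes its closed
  neighbourhood (credited to her), and play continues (vertices that thereby
  become isolated are credited in the recursive call).\<close>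
fun infl :: "nat \<Rightarrow> bool \<Rightarrow> ('a \<Rightarrow> bool) \<Rightarrow> ('a \<Rightarrow> 'a \<Rightarrow> bool) \<Rightarrow> 'a set \<Rightarrow> int" where
  "infl 0 left c E V = credit c (iso E V)"
| "infl (Suc n) left c E V =
     credit c (iso E V) +
     (let U = V - iso E V; M = {x\<in>U. c x = left} in
      if M = {} then 0
      else if left then
        Max ((\<lambda>x. int (card (cnbhd E U x)) + infl n False c E (U - cnbhd E U x)) ` M)
      else
        Min ((\<lambda>x. - int (card (cnbhd E U x)) + infl n True c E (U - cnbhd E U x)) ` M))"

definition Ls :: "'a set \<Rightarrow> ('a \<Rightarrow> bool) \<Rightarrow> ('a \<Rightarrow> 'a \<Rightarrow> bool) \<Rightarrow> int" where
  "Ls V c E = infl (card V) True c E V"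

definition Rs :: "'a set \<Rightarrow> ('a \<Rightarrow> bool) \<Rightarrow> ('a \<Rightarrow> 'a \<Rightarrow> bool) \<Rightarrow> int" where
  "Rs V c E = infl (card V) False c E V"

definition sum_V :: "'a set \<Rightarrow> 'b set \<Rightarrow> ('a + 'b) set" where
  "sum_V V W = Inl ` V \<union> Inr ` W"

definition sum_col :: "('a \<Rightarrow> bool) \<Rightarrow> ('b \<Rightarrow> bool) \<Rightarrow> ('a + 'b) \<Rightarrow> bool" where
  "sum_col c d = case_sum c d"

fun sum_E :: "('a \<Rightarrow> 'a \<Rightarrow> bool) \<Rightarrow> ('b \<Rightarrow> 'b \<Rightarrow> bool) \<Rightarrow> ('a + 'b) \<Rightarrow> ('a + 'b) \<Rightarrow> bool" where
  "sum_E E F (Inl x) (Inl y) = E x y"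
| "sum_E E F (Inr x) (Inr y) = F x y"
| "sum_E E F _ _ = False"

fun walk_le :: "'a set \<Rightarrow> ('a \<Rightarrow> 'a \<Rightarrow> bool) \<Rightarrow> nat \<Rightarrow> 'a \<Rightarrow> 'a \<Rightarrow> bool" where
  "walk_le V E 0 u v \<longleftrightarrow> u = v"
| "walk_le V E (Suc n) u v \<longleftrightarrow> walk_le V E n u v \<or> (\<exists>w\<in>V. E u w \<and> walk_le V E n w v)"

text \<open>d(u,v) \<ge> 3 (distance infinite between components): no walk of length \<le> 2.\<close>
definition dist_ge3 :: "'a set \<Rightarrow> ('a \<Rightarrow> 'a \<Rightarrow> bool) \<Rightarrow> 'a \<Rightarrow> 'a \<Rightarrow> bool" where
  "dist_ge3 V E u v \<longleftrightarrow> \<not> walk_le V E 2 u v"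

definition BW_automorphism :: "'a set \<Rightarrow> ('a \<Rightarrow> bool) \<Rightarrow> ('a \<Rightarrow> 'a \<Rightarrow> bool) \<Rightarrow> ('a \<Rightarrow> 'a) \<Rightarrow> bool" where
  "BW_automorphism V c E \<phi> \<longleftrightarrow>
     bij_betw \<phi> V V \<and>
     (\<forall>u\<in>V. \<forall>v\<in>V. E u v \<longleftrightarrow> E (\<phi> u) (\<phi> v)) \<and>
     (\<forall>u\<in>V. \<phi> (\<phi> u) = u) \<and>
     (\<forall>u\<in>V. c (\<phi> u) \<noteq> c u) \<and>
     (\<forall>v\<in>V. dist_ge3 V E v (\<phi> v))"

end

theory Submission
  imports Defs
begin

text \<open>
  Mirror strategy: whenever the opponent moves at a vertex x of the component G, answer at
  \<phi> x. Since \<phi> is a colour-reversing involutive automorphism with d(v, \<phi> v) \<ge> 3, the closed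
  neighbourhoods of x and \<phi> x are disjoint mirror images. The answer removes as many vertices
  as the move, it leaves a position that is again symmetric on G, and it isolates the mirror
  images of the vertices isolated by the move, which cancels their credit. So moving in G gains
  nothing, while a move in the rest of the position can be copied with the same value.

  This fails only when the rest offers no move at all; then one needs that Bipartite Influence
  is not a zugzwang game, Rs \<le> Ls. That holds because deleting a white vertex lowers each score
  by at most one: deleting the white neighbours of a black vertex x one at a time changes Rs by
  at most their number and leaves x isolated, which reproduces the value of Left's move at x.
  The bound for deleting a white vertex in turn uses Rs \<le> Ls on smaller positions, so both
  facts are proved by one induction.
\<close>

section \<open>Fuel, credits and relabelling\<close>

lemma infl_Suc_fuel:
  "finite X \<Longrightarrow> card X \<le> n \<Longrightarrow> infl (Suc n) b c E X = infl n b c E X"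
proof (induction n arbitrary: X b)
  case 0
  then show ?case by (simp add: iso_def)
next
  case (Suc n)
  let ?U = "X - iso E X"
  have "card (?U - cnbhd E ?U x) \<le> n" if "x \<in> ?U" for x
  proof -
    have "card (?U - cnbhd E ?U x) < card X"
      using that Suc.prems by (intro psubset_card_mono) (auto simp: cnbhd_def)
    with Suc.prems show ?thesis by simp
  qed
  then have IH: "infl (Suc n) b' c E (?U - cnbhd E ?U x) = infl n b' c E (?U - cnbhd E ?U x)"
    if "x \<in> ?U" for x b'
    using that Suc.prems by (intro Suc.IH) auto
  have "(\<lambda>x. int (card (cnbhd E ?U x)) + infl (Suc n) False c E (?U - cnbhd E ?U x)) ` M
      = (\<lambda>x. int (card (cnbhd E ?U x)) + infl n False c E (?U - cnbhd E ?U x)) ` M"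
    "(\<lambda>x. - int (card (cnbhd E ?U x)) + infl (Suc n) True c E (?U - cnbhd E ?U x)) ` M
      = (\<lambda>x. - int (card (cnbhd E ?U x)) + infl n True c E (?U - cnbhd E ?U x)) ` M"
    if "M \<subseteq> ?U" for M
    by (rule image_cong[OF refl], simp only: IH subsetD[OF that])+
  from this[OF Collect_restrict] show ?case
    unfolding infl.simps(2)[of "Suc n" b c E X] infl.simps(2)[of n b c E X] Let_def
    by (simp only:)
qed

lemma infl_fuel_card:
  assumes "finite X" "card X \<le> n"
  shows "infl n b c E X = infl (card X) b c E X"
  using assms(2)
proof (induction n rule: dec_induct)
  case (step n)
  then show ?case using infl_Suc_fuel[OF assms(1), of n] by simp
qed simp

lemma credit_empty [simp]: "credit c {} = 0"
  by (simp add: credit_def)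

lemma credit_singleton: "credit c {x} = (if c x then 1 else -1)"
proof -
  have "{v \<in> {x}. P v} = (if P x then {x} else {})" for P by auto
  then show ?thesis by (simp add: credit_def)
qed

lemma credit_black:
  assumes "\<forall>v\<in>S. c v" shows "credit c S = int (card S)"
proof -
  have black: "{v \<in> S. c v} = S" and white: "{v \<in> S. \<not> c v} = {}" using assms by auto
  show ?thesis unfolding credit_def black white by simp
qed

lemma credit_Not: "credit (\<lambda>v. \<not> c v) S = - credit c S"
  by (simp add: credit_def)

lemma credit_Un:
  assumes "finite A" "finite B" "A \<inter> B = {}"
  shows "credit c (A \<union> B) = credit c A + credit c B"
proof -
  have "{v \<in> A \<union> B. P v} = {v \<in> A. P v} \<union> {v \<in> B. P v}" for P by auto
  with assms show ?thesis
    unfolding credit_def by (simp add: card_Un_disjoint disjoint_iff)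
qed

lemma credit_image:
  assumes "inj_on f S" "\<And>u. u \<in> S \<Longrightarrow> c' (f u) = c u"
  shows "credit c' (f ` S) = credit c S"
proof -
  have "{v \<in> f ` S. c' v = p} = f ` {v \<in> S. c v = p}" for p using assms(2) by auto
  from this[of True] this[of False] assms(1) show ?thesis
    unfolding credit_def by (simp add: card_image inj_on_subset)
qed

lemma iso_subset: "iso E X \<subseteq> X"
  by (auto simp: iso_def)

lemma iso_image:
  assumes "\<And>u v. u \<in> X \<Longrightarrow> v \<in> X \<Longrightarrow> E' (f u) (f v) = E u v"
  shows "iso E' (f ` X) = f ` iso E X"
  using assms by (auto simp: iso_def)

lemma cnbhd_image:
  assumes "x \<in> X" "\<And>u v. u \<in> X \<Longrightarrow> v \<in> X \<Longrightarrow> E' (f u) (f v) = E u v"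
  shows "cnbhd E' (f ` X) (f x) = f ` cnbhd E X x"
  using assms by (auto simp: cnbhd_def)

lemma cnbhd_subset_eq:
  assumes "x \<in> Y" "Y \<subseteq> U" "cnbhd E U x \<subseteq> Y"
  shows "cnbhd E Y x = cnbhd E U x"
  using assms by (auto simp: cnbhd_def)

lemma infl_image:
  assumes "inj_on f X" and "\<And>u. u \<in> X \<Longrightarrow> c' (f u) = c u"
    and "\<And>u v. u \<in> X \<Longrightarrow> v \<in> X \<Longrightarrow> E' (f u) (f v) = E u v"
  shows "infl n b c' E' (f ` X) = infl n b c E X"
  using assms
proof (induction n arbitrary: X b)
  case 0
  have "credit c' (f ` iso E X) = credit c (iso E X)"
    using 0 iso_subset[of E X] by (intro credit_image) (auto intro: inj_on_subset)
  with 0 show ?case by (simp add: iso_image)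
next
  case (Suc n)
  let ?U = "X - iso E X"
  have inj: "inj_on f Y" if "Y \<subseteq> X" for Y
    using that Suc.prems(1) by (rule inj_on_subset[rotated])
  have isos: "iso E' (f ` X) = f ` iso E X"
    using Suc.prems(3) by (rule iso_image)
  have U: "f ` X - iso E' (f ` X) = f ` ?U"
    unfolding isos using Suc.prems(1) iso_subset[of E X]
    by (intro inj_on_image_set_diff[symmetric]) auto
  have N: "cnbhd E' (f ` ?U) (f x) = f ` cnbhd E ?U x" if "x \<in> ?U" for x
    using that Suc.prems(3) by (intro cnbhd_image) auto
  have card_N: "card (cnbhd E' (f ` ?U) (f x)) = card (cnbhd E ?U x)" if "x \<in> ?U" for x
    unfolding N[OF that] using that by (intro card_image inj) (auto simp: cnbhd_def)
  have rest: "f ` ?U - cnbhd E' (f ` ?U) (f x) = f ` (?U - cnbhd E ?U x)" if "x \<in> ?U" for x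
    unfolding N[OF that] using that
    by (intro inj_on_image_set_diff[OF inj, symmetric]) (auto simp: cnbhd_def)
  have IH: "infl n b' c' E' (f ` (?U - cnbhd E ?U x)) = infl n b' c E (?U - cnbhd E ?U x)" for x b'
    by (rule Suc.IH) (use Suc.prems in \<open>auto intro: inj\<close>)
  have M: "{y \<in> f ` ?U. c' y = b} = f ` {x \<in> ?U. c x = b}"
    using Suc.prems(2) by auto
  have moves:
    "(\<lambda>y. int (card (cnbhd E' (f ` ?U) y)) + infl n False c' E' (f ` ?U - cnbhd E' (f ` ?U) y))
        ` f ` {x \<in> ?U. c x = b}
     = (\<lambda>x. int (card (cnbhd E ?U x)) + infl n False c E (?U - cnbhd E ?U x)) ` {x \<in> ?U. c x = b}"
    "(\<lambda>y. - int (card (cnbhd E' (f ` ?U) y)) + infl n True c' E' (f ` ?U - cnbhd E' (f ` ?U) y))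
        ` f ` {x \<in> ?U. c x = b}
     = (\<lambda>x. - int (card (cnbhd E ?U x)) + infl n True c E (?U - cnbhd E ?U x)) ` {x \<in> ?U. c x = b}"
    unfolding image_image by (auto simp: rest card_N IH intro!: image_cong)
  have credits: "credit c' (iso E' (f ` X)) = credit c (iso E X)"
    unfolding isos using Suc.prems(2) iso_subset[of E X] by (intro credit_image inj) auto
  show ?case
    unfolding infl.simps(2)[of n b c' E'] infl.simps(2)[of n b c E] Let_def U M moves credits
    by simp
qed

text \<open>
  The predicate bipartite_graph only constrains the edges inside V, whereas the locale below wants
  a symmetric bipartite edge relation on the whole type; restricting E to V changes no score.
\<close>

definition restrict_edges :: "'a set \<Rightarrow> ('a \<Rightarrow> 'a \<Rightarrow> bool) \<Rightarrow> 'a \<Rightarrow> 'a \<Rightarrow> bool" where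
  "restrict_edges V E u v \<longleftrightarrow> u \<in> V \<and> v \<in> V \<and> E u v"

lemma infl_restrict_edges: "infl n b c (restrict_edges V E) V = infl n b c E V"
  using infl_image[of id V c c "restrict_edges V E" E] by (simp add: restrict_edges_def)

section \<open>Optimal scores\<close>

locale bipartite_influence =
  fixes c :: "'a \<Rightarrow> bool" and E :: "'a \<Rightarrow> 'a \<Rightarrow> bool"
  assumes edge_sym: "E u v \<longleftrightarrow> E v u"
    and edge_colours: "E u v \<Longrightarrow> c u \<noteq> c v"

lemma bipartite_influence_restrict_edges:
  "bipartite_graph V c E \<Longrightarrow> bipartite_influence c (restrict_edges V E)"
  by unfold_locales (auto simp: bipartite_graph_def restrict_edges_def)

context bipartite_influence
begin

lemma iso_Diff:
  assumes "I \<subseteq> iso E X"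
  shows "iso E (X - I) = iso E X - I"
  using assms edge_sym by (auto simp: iso_def)

lemma iso_Diff_iso [simp]: "iso E (X - iso E X) = {}"
  by (simp add: iso_Diff)

lemma isolation_free_neighbour:
  assumes "iso E U = {}" "x \<in> U"
  obtains y where "y \<in> U" "E x y" "c y \<noteq> c x"
  using assms edge_colours by (auto simp: iso_def)

lemma isolation_free_colours:
  assumes "iso E U = {}" "U \<noteq> {}"
  shows "\<exists>x\<in>U. c x" "\<exists>x\<in>U. \<not> c x"
proof -
  obtain x where "x \<in> U" using assms(2) by blast
  moreover obtain y where "y \<in> U" "c y \<noteq> c x"
    using isolation_free_neighbour[OF assms(1) \<open>x \<in> U\<close>] by blast
  ultimately show "\<exists>x\<in>U. c x" "\<exists>x\<in>U. \<not> c x" by (cases "c x"; blast)+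
qed

definition score :: "bool \<Rightarrow> 'a set \<Rightarrow> int" where
  "score b X = infl (card X) b c E X"

definition left_move :: "'a set \<Rightarrow> 'a \<Rightarrow> int" where
  "left_move U x = int (card (cnbhd E U x)) + score False (U - cnbhd E U x)"

definition right_move :: "'a set \<Rightarrow> 'a \<Rightarrow> int" where
  "right_move U x = - int (card (cnbhd E U x)) + score True (U - cnbhd E U x)"

definition best_left :: "'a set \<Rightarrow> int" where
  "best_left U = (if {x \<in> U. c x} = {} then 0 else Max (left_move U ` {x \<in> U. c x}))"

definition best_right :: "'a set \<Rightarrow> int" where
  "best_right U = (if {x \<in> U. \<not> c x} = {} then 0 else Min (right_move U ` {x \<in> U. \<not> c x}))"

lemma score_empty [simp]: "score b {} = 0"
  by (simp add: score_def iso_def)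

lemma score_unfold:
  assumes "finite X"
  defines "U \<equiv> X - iso E X"
  shows "score True X = credit c (iso E X) + best_left U"
    and "score False X = credit c (iso E X) + best_right U"
proof -
  have "score True X = credit c (iso E X) + best_left U \<and>
        score False X = credit c (iso E X) + best_right U"
  proof (cases "card X")
    case 0
    with assms show ?thesis by (simp add: iso_def best_left_def best_right_def)
  next
    case (Suc m)
    have "card (U - cnbhd E U x) \<le> m" if "x \<in> U" for x
    proof -
      have "card (U - cnbhd E U x) < card X"
        using that assms by (intro psubset_card_mono) (auto simp: cnbhd_def)
      with Suc show ?thesis by simp
    qed
    then have fuel: "infl m b c E (U - cnbhd E U x) = score b (U - cnbhd E U x)" if "x \<in> U" for x b
      unfolding score_def using that assms by (intro infl_fuel_card) auto
    have "(\<lambda>x. int (card (cnbhd E U x)) + infl m False c E (U - cnbhd E U x)) ` {x \<in> U. c x}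
        = left_move U ` {x \<in> U. c x}"
      "(\<lambda>x. - int (card (cnbhd E U x)) + infl m True c E (U - cnbhd E U x)) ` {x \<in> U. \<not> c x}
        = right_move U ` {x \<in> U. \<not> c x}"
      by (auto simp: left_move_def right_move_def fuel intro!: image_cong)
    then show ?thesis
      unfolding score_def Suc infl.simps(2)[of m _ c E X] Let_def best_left_def best_right_def
        U_def[symmetric]
      by auto
  qed
  then show "score True X = credit c (iso E X) + best_left U"
    and "score False X = credit c (iso E X) + best_right U"
    by auto
qed

lemma score_Diff_isolated:
  assumes "finite X" "I \<subseteq> iso E X"
  shows "score b X = credit c I + score b (X - I)"
proof -
  have same_moves: "X - I - iso E (X - I) = X - iso E X"
    using assms(2) by (auto simp: iso_Diff)
  have "finite (iso E X)"
    using assms(1) iso_subset by (rule finite_subset[rotated])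
  then have "credit c (iso E X) = credit c I + credit c (iso E (X - I))"
    using assms(2) credit_Un[of I "iso E X - I" c] by (simp add: iso_Diff finite_subset Un_absorb1)
  then show ?thesis
    using score_unfold[OF assms(1)] score_unfold[of "X - I"] assms(1) same_moves
    by (cases b) simp_all
qed

lemma score_Diff_isolated_black:
  assumes "finite X" "I \<subseteq> iso E X" "\<forall>v\<in>I. c v"
  shows "score b X = int (card I) + score b (X - I)"
  using score_Diff_isolated[OF assms(1,2)] credit_black[OF assms(3)] by simp

lemma left_move_le_score:
  assumes "finite U" "iso E U = {}" "x \<in> U" "c x"
  shows "left_move U x \<le> score True U"
  using score_unfold(1)[OF assms(1)] assms by (auto simp: best_left_def intro!: Max_ge)

lemma score_le_right_move:
  assumes "finite U" "iso E U = {}" "x \<in> U" "\<not> c x"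
  shows "score False U \<le> right_move U x"
  using score_unfold(2)[OF assms(1)] assms by (auto simp: best_right_def intro!: Min_le)

lemma best_left_move:
  assumes "finite U" "iso E U = {}" "U \<noteq> {}"
  obtains x where "x \<in> U" "c x" "score True U = left_move U x"
proof -
  have "{x \<in> U. c x} \<noteq> {}" using isolation_free_colours[OF assms(2,3)] by blast
  then have "best_left U \<in> left_move U ` {x \<in> U. c x}"
    unfolding best_left_def using assms(1) by (auto intro!: Max_in simp del: Collect_empty_eq)
  with score_unfold(1)[OF assms(1)] assms(2) that show ?thesis by auto
qed

lemma best_right_move:
  assumes "finite U" "iso E U = {}" "U \<noteq> {}"
  obtains x where "x \<in> U" "\<not> c x" "score False U = right_move U x"
proof -
  have "{x \<in> U. \<not> c x} \<noteq> {}" using isolation_free_colours[OF assms(2,3)] by blast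
  then have "best_right U \<in> right_move U ` {x \<in> U. \<not> c x}"
    unfolding best_right_def using assms(1) by (auto intro!: Min_in simp del: Collect_empty_eq)
  with score_unfold(2)[OF assms(1)] assms(2) that show ?thesis by auto
qed

section \<open>Bipartite Influence is not a zugzwang game\<close>

definition white_deletion_bounded :: "'a set \<Rightarrow> bool" where
  "white_deletion_bounded X \<longleftrightarrow> (\<forall>w\<in>X. \<not> c w \<longrightarrow> (\<forall>b. score b X \<le> score b (X - {w}) + 1))"

lemma iso_Diff_white:
  assumes "iso E U = {}" "\<not> c w" "j \<in> iso E (U - {w})"
  shows "E j w" and "c j"
proof -
  show "E j w" using assms(1,3) by (auto simp: iso_def)
  then show "c j" using edge_colours assms(2) by blast
qed

lemma score_Diff_white:
  assumes "finite U" "iso E U = {}" "\<not> c w"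
  shows "score b (U - {w}) = int (card (iso E (U - {w}))) + score b (U - {w} - iso E (U - {w}))"
  using assms iso_Diff_white(2) by (intro score_Diff_isolated_black) auto

lemma score_move_Diff_white:
  assumes "finite U" "iso E U = {}" "\<not> c w"
    and J: "J = iso E (U - {w})" and U': "U' = U - {w} - J" and "x \<in> U'"
  shows "cnbhd E U' x = cnbhd E U x - {w}"
    and "score b (U - cnbhd E U x - {w}) = int (card J) + score b (U' - cnbhd E U' x)"
proof -
  have no_J: "\<forall>v\<in>U - {w}. \<not> E j v" if "j \<in> J" for j
    using that unfolding J iso_def by blast
  have "x \<notin> J" "x \<noteq> w" using \<open>x \<in> U'\<close> U' by auto
  then have x_no_J: "\<not> E x j" if "j \<in> J" for j
    using no_J[OF that] \<open>x \<in> U'\<close> U' edge_sym by auto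
  show N: "cnbhd E U' x = cnbhd E U x - {w}"
    using \<open>x \<noteq> w\<close> x_no_J U' by (auto simp: cnbhd_def)
  have "J \<subseteq> iso E (U - cnbhd E U x - {w})"
  proof
    fix j assume j: "j \<in> J"
    have "j \<in> U - {w}" using j iso_subset[of E "U - {w}"] unfolding J by blast
    moreover have "j \<notin> cnbhd E U x" using x_no_J[OF j] \<open>x \<notin> J\<close> j by (auto simp: cnbhd_def)
    ultimately show "j \<in> iso E (U - cnbhd E U x - {w})"
      using no_J[OF j] by (auto simp: iso_def)
  qed
  moreover have "U - cnbhd E U x - {w} - J = U' - cnbhd E U' x"
    using N U' by blast
  moreover have "\<forall>j\<in>J. c j" using iso_Diff_white(2)[OF assms(2,3)] J by blast
  ultimately show "score b (U - cnbhd E U x - {w}) = int (card J) + score b (U' - cnbhd E U' x)"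
    using assms(1) score_Diff_isolated_black[of "U - cnbhd E U x - {w}" J b] by simp
qed

lemma left_move_pendant:
  assumes fin: "finite U" and isf: "iso E U = {}" and w: "w \<in> U" "\<not> c w"
    and J: "J = iso E (U - {w})" and U': "U' = U - {w} - J" and x: "x \<in> J"
  shows "left_move U x = int (card J) + 1 + score False U'"
proof -
  have "x \<noteq> w" using x iso_subset[of E "U - {w}"] unfolding J by blast
  have "E x w" using x unfolding J by (rule iso_Diff_white(1)[OF isf w(2)])
  moreover have "\<not> E x v" if "v \<in> U - {w}" for v
    using x that unfolding J iso_def by blast
  ultimately have "cnbhd E U x = {x, w}" using w(1) by (auto simp: cnbhd_def)
  moreover have "score False (U - {w} - {x}) = int (card J) - 1 + score False U'"
  proof -
    have "J - {x} \<subseteq> iso E (U - {w} - {x})" unfolding J iso_def by blast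
    moreover have "U - {w} - {x} - (J - {x}) = U'" using x unfolding U' by blast
    moreover have "\<forall>j\<in>J. c j" using iso_Diff_white(2)[OF isf w(2)] J by blast
    moreover have "finite J" using fin unfolding J by (auto intro: finite_subset[OF iso_subset])
    then have "card J = Suc (card (J - {x}))" using x by (rule card.remove)
    ultimately show ?thesis
      using fin score_Diff_isolated_black[of "U - {w} - {x}" "J - {x}" False] by simp
  qed
  moreover have "U - {x, w} = U - {w} - {x}" by blast
  ultimately show ?thesis unfolding left_move_def using \<open>x \<noteq> w\<close> by simp
qed

lemma score_True_delete_white:
  assumes fin: "finite U" and isf: "iso E U = {}" and w: "w \<in> U" "\<not> c w"
    and IH: "\<And>Y. Y \<subset> U \<Longrightarrow> white_deletion_bounded Y \<and> score False Y \<le> score True Y"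
  shows "score True U \<le> score True (U - {w}) + 1"
proof -
  define J where "J = iso E (U - {w})"
  define U' where "U' = U - {w} - J"
  have U': "finite U'" "iso E U' = {}" "U' \<subset> U"
    using fin w(1) unfolding U'_def J_def by auto
  obtain x where x: "x \<in> U" "c x" "score True U = left_move U x"
    using best_left_move[OF fin isf] w by blast
  have "left_move U x \<le> score True U' + int (card J) + 1"
  proof (cases "x \<in> J")
    case True
    have "score False U' \<le> score True U'" using IH U'(3) by blast
    with left_move_pendant[OF fin isf w J_def U'_def True] show ?thesis by simp
  next
    case False
    then have "x \<in> U'" using x(1,2) w(2) unfolding U'_def by auto
    note moved = score_move_Diff_white[OF fin isf w(2) J_def U'_def this]
    let ?A = "cnbhd E U x"
    have "score False (U - ?A) \<le> score False (U - ?A - {w}) + (if w \<in> ?A then 0 else 1)"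
    proof (cases "w \<in> ?A")
      case False
      have "U - ?A \<subset> U" using x(1) by (auto simp: cnbhd_def)
      then have "white_deletion_bounded (U - ?A)" using IH by blast
      with False w show ?thesis unfolding white_deletion_bounded_def by simp
    qed simp
    moreover have "card ?A = card (?A - {w}) + (if w \<in> ?A then 1 else 0)"
    proof (cases "w \<in> ?A")
      case True
      have "finite ?A" using fin by (simp add: cnbhd_def)
      with True show ?thesis using card.remove[of ?A w] by simp
    qed simp
    ultimately have "left_move U x \<le> left_move U' x + int (card J) + 1"
      unfolding left_move_def by (simp add: moved split: if_splits)
    then show ?thesis using left_move_le_score[OF U'(1,2) \<open>x \<in> U'\<close> x(2)] by simp
  qed
  then show ?thesis using x(3) score_Diff_white[OF fin isf w(2), of True]
    unfolding J_def U'_def by simp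
qed

lemma score_False_delete_white:
  assumes fin: "finite U" and isf: "iso E U = {}" and w: "w \<in> U" "\<not> c w"
    and IH: "\<And>Y. Y \<subset> U \<Longrightarrow> white_deletion_bounded Y"
  shows "score False U \<le> score False (U - {w}) + 1"
proof -
  define J where "J = iso E (U - {w})"
  define U' where "U' = U - {w} - J"
  have U': "finite U'" "iso E U' = {}"
    using fin unfolding U'_def J_def by auto
  have score_U_w: "score False (U - {w}) = int (card J) + score False U'"
    unfolding U'_def J_def by (rule score_Diff_white[OF fin isf w(2)])
  show ?thesis
  proof (cases "U' = {}")
    case True
    then have "cnbhd E U w = U"
      using iso_Diff_white(1)[OF isf w(2)] edge_sym w(1) unfolding U'_def J_def cnbhd_def by blast
    then have "score False U \<le> - int (card U)"
      using score_le_right_move[OF fin isf w] by (simp add: right_move_def)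
    then show ?thesis using score_U_w True by simp
  next
    case False
    then obtain y where y: "y \<in> U'" "\<not> c y" "score False U' = right_move U' y"
      using best_right_move[OF U'] by blast
    note moved = score_move_Diff_white[OF fin isf w(2) J_def U'_def y(1)]
    let ?A = "cnbhd E U y"
    have "y \<in> U" using y(1) unfolding U'_def by blast
    have "w \<notin> ?A"
      using y(1,2) w(2) edge_colours unfolding U'_def cnbhd_def by blast
    moreover have "U - ?A \<subset> U" using \<open>y \<in> U\<close> by (auto simp: cnbhd_def)
    ultimately have "score True (U - ?A) \<le> score True (U - ?A - {w}) + 1"
      using IH w unfolding white_deletion_bounded_def by blast
    with \<open>w \<notin> ?A\<close> have "right_move U y \<le> right_move U' y + int (card J) + 1"
      unfolding right_move_def moved by simp
    then show ?thesis
      using score_le_right_move[OF fin isf \<open>y \<in> U\<close> y(2)] y(3) score_U_w by simp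
  qed
qed

lemma white_deletion_bounded_step:
  assumes fin: "finite X"
    and IH: "\<And>Y. Y \<subset> X \<Longrightarrow> white_deletion_bounded Y \<and> score False Y \<le> score True Y"
  shows "white_deletion_bounded X"
  unfolding white_deletion_bounded_def
proof (intro ballI impI allI)
  fix w b assume w: "w \<in> X" "\<not> c w"
  let ?U = "X - iso E X"
  show "score b X \<le> score b (X - {w}) + 1"
  proof (cases "w \<in> iso E X")
    case True
    then have "score b X = credit c {w} + score b (X - {w})"
      using fin by (intro score_Diff_isolated) auto
    then show ?thesis using w(2) by (simp add: credit_singleton)
  next
    case False
    have "iso E X \<subseteq> iso E (X - {w})" using False by (auto simp: iso_def)
    moreover have "X - {w} - iso E X = ?U - {w}" by blast
    ultimately have "score b (X - {w}) = credit c (iso E X) + score b (?U - {w})"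
      using fin score_Diff_isolated[of "X - {w}" "iso E X" b] by simp
    moreover have "score b X = credit c (iso E X) + score b ?U"
      using fin by (intro score_Diff_isolated) auto
    moreover have "?U \<subseteq> X" "finite ?U" "iso E ?U = {}" "w \<in> ?U" using fin w False by auto
    then have "score b ?U \<le> score b (?U - {w}) + 1"
      using score_True_delete_white[of ?U w] score_False_delete_white[of ?U w] w(2) IH
      by (cases b) (simp_all add: psubset_subset_trans)
    ultimately show ?thesis by simp
  qed
qed

lemma score_False_Diff_whites:
  assumes "finite Ws" "Ws \<subseteq> U" "\<forall>w\<in>Ws. \<not> c w"
    and bounded: "\<And>Y. Y \<subseteq> U \<Longrightarrow> white_deletion_bounded Y"
  shows "score False U \<le> score False (U - Ws) + int (card Ws)"
  using assms(1-3)
proof (induction Ws rule: finite_induct)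
  case (insert w Ws)
  then have "score False (U - Ws) \<le> score False (U - Ws - {w}) + 1"
    using bounded[of "U - Ws"] unfolding white_deletion_bounded_def by blast
  moreover have "U - Ws - {w} = U - insert w Ws" by blast
  ultimately show ?case using insert by simp
qed simp

lemma nonzugzwang_step:
  assumes fin: "finite X" and bounded: "\<And>Y. Y \<subseteq> X \<Longrightarrow> white_deletion_bounded Y"
  shows "score False X \<le> score True X"
proof -
  let ?U = "X - iso E X"
  have "score False ?U \<le> score True ?U"
  proof (cases "?U = {}")
    case False
    then obtain x where x: "x \<in> ?U" "c x"
      using isolation_free_colours[of ?U] by auto
    let ?A = "cnbhd E ?U x"
    have "score False ?U \<le> score False (?U - (?A - {x})) + int (card (?A - {x}))"
      using fin x edge_colours bounded
      by (intro score_False_Diff_whites) (auto simp: cnbhd_def)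
    moreover have "score False (?U - (?A - {x})) = credit c {x} + score False (?U - ?A)"
    proof -
      have "{x} \<subseteq> iso E (?U - (?A - {x}))"
        using x edge_colours by (auto simp: iso_def cnbhd_def)
      moreover have "?U - (?A - {x}) - {x} = ?U - ?A" by (auto simp: cnbhd_def)
      ultimately show ?thesis using fin score_Diff_isolated[of "?U - (?A - {x})" "{x}"] by simp
    qed
    moreover have "card ?A = Suc (card (?A - {x}))"
      using fin by (intro card.remove) (auto simp: cnbhd_def)
    ultimately have "score False ?U \<le> left_move ?U x"
      unfolding left_move_def using x(2) by (simp add: credit_singleton)
    also have "\<dots> \<le> score True ?U"
      using fin x by (intro left_move_le_score) auto
    finally show ?thesis .
  next
    case True
    show ?thesis unfolding True by simp
  qed
  then show ?thesis
    using fin score_Diff_isolated[of X "iso E X"] by simp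
qed

lemma white_deletion_bounded_nonzugzwang:
  "finite X \<Longrightarrow> white_deletion_bounded X \<and> score False X \<le> score True X"
proof (induction X rule: finite_psubset_induct)
  case (psubset X)
  have "white_deletion_bounded Y" if "Y \<subseteq> X" for Y
    using that psubset white_deletion_bounded_step[of X] by (cases "Y = X") auto
  with psubset.hyps show ?case using nonzugzwang_step by blast
qed

corollary nonzugzwang: "finite X \<Longrightarrow> score False X \<le> score True X"
  using white_deletion_bounded_nonzugzwang by blast

end

section \<open>The mirror strategy\<close>

text \<open>
  D is a union of connected components on which \<phi> acts; the last two assumptions say that
  d(u, \<phi> u) \<ge> 3. A position U splits into its symmetric part U \<inter> D and the rest U - D.
\<close>

locale mirror_symmetry = bipartite_influence +
  fixes D :: "'a set" and \<phi> :: "'a \<Rightarrow> 'a"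
  assumes mirror_in: "u \<in> D \<Longrightarrow> \<phi> u \<in> D"
    and mirror_involutive: "u \<in> D \<Longrightarrow> \<phi> (\<phi> u) = u"
    and mirror_colour: "u \<in> D \<Longrightarrow> c (\<phi> u) \<noteq> c u"
    and mirror_edge: "u \<in> D \<Longrightarrow> v \<in> D \<Longrightarrow> E (\<phi> u) (\<phi> v) \<longleftrightarrow> E u v"
    and component_closed: "u \<in> D \<Longrightarrow> E u v \<Longrightarrow> v \<in> D"
    and mirror_not_adjacent: "u \<in> D \<Longrightarrow> \<not> E u (\<phi> u)"
    and mirror_no_common_neighbour: "u \<in> D \<Longrightarrow> E u w \<Longrightarrow> \<not> E w (\<phi> u)"
begin

definition mirror_closed :: "'a set \<Rightarrow> bool" where
  "mirror_closed U \<longleftrightarrow> (\<forall>u\<in>U \<inter> D. \<phi> u \<in> U)"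

lemma inj_on_mirror: "inj_on \<phi> D"
  by (metis inj_onI mirror_involutive)

lemma outside_component: "u \<notin> D \<Longrightarrow> E u v \<Longrightarrow> v \<notin> D"
  using component_closed edge_sym by blast

lemma credit_mirror_invariant:
  assumes "S \<subseteq> D" "\<phi> ` S \<subseteq> S"
  shows "credit c S = 0"
proof -
  have "u \<in> \<phi> ` S" if "u \<in> S" for u
  proof (rule image_eqI)
    show "u = \<phi> (\<phi> u)" using that assms(1) mirror_involutive by auto
    show "\<phi> u \<in> S" using that assms(2) by blast
  qed
  with assms(2) have "credit c S = credit c (\<phi> ` S)" by (metis subset_antisym subsetI)
  also have "\<dots> = credit (\<lambda>v. \<not> c v) S"
  proof (rule credit_image)
    show "inj_on \<phi> S" using assms(1) inj_on_mirror by (rule inj_on_subset[rotated])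
    show "c (\<phi> u) = (\<not> c u)" if "u \<in> S" for u
      using that assms(1) mirror_colour by blast
  qed
  also have "\<dots> = - credit c S" by (rule credit_Not)
  finally show ?thesis by linarith
qed

lemma cnbhd_subset_D: "x \<in> D \<Longrightarrow> cnbhd E U x \<subseteq> D"
  using component_closed by (auto simp: cnbhd_def)

lemma cnbhd_mirror:
  assumes closed: "mirror_closed U" and x: "x \<in> U \<inter> D"
  shows "cnbhd E U (\<phi> x) = \<phi> ` cnbhd E U x"
proof (intro equalityI subsetI)
  fix y assume y: "y \<in> cnbhd E U (\<phi> x)"
  show "y \<in> \<phi> ` cnbhd E U x"
  proof (cases "y = \<phi> x")
    case True
    then show ?thesis by (simp add: cnbhd_def)
  next
    case False
    with y have "y \<in> U" "E (\<phi> x) y" by (auto simp: cnbhd_def)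
    then have "y \<in> D" using x mirror_in component_closed by blast
    then have "E x (\<phi> y)"
      using \<open>E (\<phi> x) y\<close> x mirror_edge[of x "\<phi> y"] mirror_in mirror_involutive by simp
    moreover have "\<phi> y \<in> U" using closed \<open>y \<in> U\<close> \<open>y \<in> D\<close> unfolding mirror_closed_def by blast
    ultimately have "\<phi> y \<in> cnbhd E U x" by (simp add: cnbhd_def)
    with mirror_involutive[OF \<open>y \<in> D\<close>] show ?thesis by (metis image_eqI)
  qed
next
  fix y assume "y \<in> \<phi> ` cnbhd E U x"
  then obtain a where a: "a \<in> cnbhd E U x" "y = \<phi> a" by blast
  show "y \<in> cnbhd E U (\<phi> x)"
  proof (cases "a = x")
    case False
    with a have "a \<in> U" "E x a" by (auto simp: cnbhd_def)
    then have "a \<in> D" using x component_closed by blast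
    then have "E (\<phi> x) (\<phi> a)" "\<phi> a \<in> U"
      using \<open>E x a\<close> \<open>a \<in> U\<close> x closed mirror_edge unfolding mirror_closed_def by auto
    with a show ?thesis by (simp add: cnbhd_def)
  qed (simp add: a cnbhd_def)
qed

lemma cnbhd_disjoint_mirror:
  assumes "x \<in> D"
  shows "cnbhd E U x \<inter> \<phi> ` cnbhd E U x = {}"
proof -
  have "a \<noteq> \<phi> a'" if a: "a \<in> cnbhd E U x" and a': "a' \<in> cnbhd E U x" for a a'
  proof
    assume mirrored: "a = \<phi> a'"
    have "a' \<in> D" using a' cnbhd_subset_D[OF assms] by blast
    consider "a = x" "a' = x" | "a = x" "E x a'" | "E x a" "a' = x" | "E x a" "E x a'"
      using a a' by (auto simp: cnbhd_def)
    then show False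
    proof cases
      case 1
      then show False using mirrored mirror_colour[OF assms] by simp
    next
      case 2
      then show False using mirrored mirror_not_adjacent[OF \<open>a' \<in> D\<close>] edge_sym by simp
    next
      case 3
      then show False using mirrored mirror_not_adjacent[OF assms] by simp
    next
      case 4
      then show False
        using mirrored mirror_no_common_neighbour[OF \<open>a' \<in> D\<close>, of x] edge_sym by simp
    qed
  qed
  then show ?thesis by blast
qed

lemma mirror_closed_Diff_mirror:
  assumes "mirror_closed U" "B \<subseteq> D"
  shows "mirror_closed (U - (B \<union> \<phi> ` B))"
  unfolding mirror_closed_def
proof
  fix u assume u: "u \<in> (U - (B \<union> \<phi> ` B)) \<inter> D"
  have "\<phi> u \<notin> B"
  proof
    assume "\<phi> u \<in> B"
    then have "\<phi> (\<phi> u) \<in> \<phi> ` B" by blast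
    with u mirror_involutive show False by auto
  qed
  moreover have "\<phi> u \<notin> \<phi> ` B"
    using u assms(2) inj_on_mirror by (auto dest: inj_onD)
  ultimately show "\<phi> u \<in> U - (B \<union> \<phi> ` B)"
    using u assms(1) unfolding mirror_closed_def by blast
qed

lemma mirror_closed_Diff_outside:
  assumes "mirror_closed U" "B \<inter> D = {}"
  shows "mirror_closed (U - B)"
  using assms mirror_in unfolding mirror_closed_def by blast

lemma iso_mirror:
  assumes "mirror_closed U"
  shows "\<phi> ` (iso E U \<inter> D) \<subseteq> iso E U \<inter> D"
proof
  fix v assume "v \<in> \<phi> ` (iso E U \<inter> D)"
  then obtain u where u: "u \<in> iso E U" "u \<in> D" "v = \<phi> u" by blast
  have "\<not> E (\<phi> u) w" if "w \<in> U" for w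
  proof
    assume "E (\<phi> u) w"
    then have "w \<in> D" using u mirror_in component_closed by blast
    with \<open>E (\<phi> u) w\<close> have "E u (\<phi> w)"
      using u mirror_edge[of u "\<phi> w"] mirror_in mirror_involutive by auto
    moreover have "\<phi> w \<in> U" using assms that \<open>w \<in> D\<close> unfolding mirror_closed_def by blast
    ultimately show False using u(1) by (auto simp: iso_def)
  qed
  then show "v \<in> iso E U \<inter> D"
    using u assms mirror_in unfolding mirror_closed_def iso_def by auto
qed

lemma mirror_closed_Diff_iso:
  assumes "mirror_closed U"
  shows "mirror_closed (U - iso E U)"
  unfolding mirror_closed_def
proof
  fix u assume u: "u \<in> (U - iso E U) \<inter> D"
  have "\<phi> u \<notin> iso E U"
  proof
    assume "\<phi> u \<in> iso E U"
    then have "\<phi> (\<phi> u) \<in> iso E U"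
      using u iso_mirror[OF assms] mirror_in by blast
    with u mirror_involutive show False by auto
  qed
  then show "\<phi> u \<in> U - iso E U"
    using u assms unfolding mirror_closed_def by blast
qed

lemma mirror_reply:
  assumes closed: "mirror_closed U" and isf: "iso E U = {}" and x: "x \<in> U \<inter> D"
  defines "A \<equiv> cnbhd E U x"
  defines "I \<equiv> iso E (U - A)"
  shows "\<phi> x \<in> U - A - I"
    and "cnbhd E (U - A - I) (\<phi> x) = \<phi> ` A"
    and "I \<subseteq> iso E (U - (A \<union> \<phi> ` A))"
proof -
  have A: "A \<subseteq> U" "A \<subseteq> D" "x \<in> A"
    using cnbhd_subset_D[of x U] x unfolding A_def by (auto simp: cnbhd_def)
  have mirror_A: "cnbhd E U (\<phi> x) = \<phi> ` A"
    using cnbhd_mirror[OF closed x] unfolding A_def .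
  have "\<phi> ` A \<subseteq> U"
    using A(1,2) closed unfolding mirror_closed_def by blast
  then have mirror_A_U: "\<phi> ` A \<subseteq> U - A"
    using cnbhd_disjoint_mirror[of x U] x unfolding A_def by blast
  have linked: "\<exists>b\<in>A. E a b" if "a \<in> A" for a
  proof (cases "a = x")
    case True
    obtain y where "y \<in> U" "E x y" using isolation_free_neighbour[OF isf] x by blast
    with True show ?thesis unfolding A_def cnbhd_def by blast
  next
    case False
    with that A(3) edge_sym show ?thesis unfolding A_def cnbhd_def by blast
  qed
  have "\<phi> a \<notin> I" if a: "a \<in> A" for a
  proof -
    obtain b where "b \<in> A" "E a b" using linked[OF a] by blast
    then have "E (\<phi> a) (\<phi> b)" using a A(2) mirror_edge by blast
    moreover have "\<phi> b \<in> U - A" using \<open>b \<in> A\<close> mirror_A_U by blast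
    ultimately show ?thesis unfolding I_def iso_def by blast
  qed
  then have mirror_A_I: "\<phi> ` A \<inter> I = {}" by blast
  show reply: "\<phi> x \<in> U - A - I"
    using A(3) mirror_A_U mirror_A_I by blast
  show "cnbhd E (U - A - I) (\<phi> x) = \<phi> ` A"
    unfolding mirror_A[symmetric]
    using reply mirror_A_U mirror_A_I by (intro cnbhd_subset_eq) (auto simp: mirror_A)
  show "I \<subseteq> iso E (U - (A \<union> \<phi> ` A))"
    using mirror_A_I iso_subset[of E "U - A"] unfolding I_def iso_def by blast
qed

lemma score_after_mirror_reply:
  assumes fin: "finite U" and closed: "mirror_closed U" and isf: "iso E U = {}"
    and x: "x \<in> U \<inter> D"
    and IH: "\<And>U'. U' \<subset> U \<Longrightarrow> mirror_closed U' \<Longrightarrow> score b U' = score b (U' - D)"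
  defines "A \<equiv> cnbhd E U x"
  defines "I \<equiv> iso E (U - A)"
  shows "score b (U - A - I - \<phi> ` A) = score b (U - D) - credit c I"
proof -
  \<comment> \<open>U - A - I - \<phi> ` A is the position after x and the reply \<phi> x; putting back I, which
    stays isolated, gives the smaller mirror-closed position U - (A \<union> \<phi> ` A).\<close>
  let ?Z = "U - (A \<union> \<phi> ` A)"
  have A: "A \<subseteq> D" "x \<in> A"
    using cnbhd_subset_D[of x U] x unfolding A_def by (auto simp: cnbhd_def)
  have "score b ?Z = score b (?Z - D)"
  proof (rule IH)
    show "?Z \<subset> U" using A(2) x by blast
    show "mirror_closed ?Z" using closed A(1) by (rule mirror_closed_Diff_mirror)
  qed
  moreover have "?Z - D = U - D" using A(1) mirror_in by blast
  moreover have "score b ?Z = credit c I + score b (?Z - I)"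
    using fin mirror_reply(3)[OF closed isf x] unfolding A_def I_def
    by (intro score_Diff_isolated) auto
  moreover have "?Z - I = U - A - I - \<phi> ` A" by blast
  ultimately show ?thesis by simp
qed

lemma mirror_left_move_le:
  assumes fin: "finite U" and closed: "mirror_closed U" and isf: "iso E U = {}"
    and x: "x \<in> U \<inter> D" "c x"
    and IH: "\<And>U'. U' \<subset> U \<Longrightarrow> mirror_closed U' \<Longrightarrow> score True U' = score True (U' - D)"
  shows "left_move U x \<le> score True (U - D)"
proof -
  define A where "A = cnbhd E U x"
  define I where "I = iso E (U - A)"
  note reply = mirror_reply[OF closed isf x(1), folded A_def I_def]
  have Y: "finite (U - A - I)" "iso E (U - A - I) = {}"
    using fin unfolding I_def by auto
  have card_A: "card (\<phi> ` A) = card A"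
    using inj_on_subset[OF inj_on_mirror] cnbhd_subset_D[of x U] x(1) unfolding A_def
    by (intro card_image) auto
  have "left_move U x = int (card A) + credit c I + score False (U - A - I)"
    unfolding left_move_def A_def[symmetric] I_def
    using fin score_Diff_isolated[of "U - A" "iso E (U - A)" False] by simp
  also have "\<dots> \<le> int (card A) + credit c I + right_move (U - A - I) (\<phi> x)"
    using score_le_right_move[OF Y reply(1)] mirror_colour x by auto
  also have "\<dots> = score True (U - D)"
    unfolding right_move_def reply(2) card_A
    using score_after_mirror_reply[OF fin closed isf x(1) IH, folded A_def I_def] by simp
  finally show ?thesis .
qed

lemma mirror_right_move_ge:
  assumes fin: "finite U" and closed: "mirror_closed U" and isf: "iso E U = {}"
    and x: "x \<in> U \<inter> D" "\<not> c x"
    and IH: "\<And>U'. U' \<subset> U \<Longrightarrow> mirror_closed U' \<Longrightarrow> score False U' = score False (U' - D)"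
  shows "score False (U - D) \<le> right_move U x"
proof -
  define A where "A = cnbhd E U x"
  define I where "I = iso E (U - A)"
  note reply = mirror_reply[OF closed isf x(1), folded A_def I_def]
  have Y: "finite (U - A - I)" "iso E (U - A - I) = {}"
    using fin unfolding I_def by auto
  have card_A: "card (\<phi> ` A) = card A"
    using inj_on_subset[OF inj_on_mirror] cnbhd_subset_D[of x U] x(1) unfolding A_def
    by (intro card_image) auto
  have "score False (U - D) = - int (card A) + credit c I + left_move (U - A - I) (\<phi> x)"
    unfolding left_move_def reply(2) card_A
    using score_after_mirror_reply[OF fin closed isf x(1) IH, folded A_def I_def] by simp
  also have "\<dots> \<le> - int (card A) + credit c I + score True (U - A - I)"
    using left_move_le_score[OF Y reply(1)] mirror_colour x by auto
  also have "\<dots> = right_move U x"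
    unfolding right_move_def A_def[symmetric] I_def
    using fin score_Diff_isolated[of "U - A" "iso E (U - A)" True] by simp
  finally show ?thesis .
qed

lemma moves_outside_D:
  assumes fin: "finite U" and closed: "mirror_closed U" and x: "x \<in> U - D"
    and IH: "\<And>U' b. U' \<subset> U \<Longrightarrow> mirror_closed U' \<Longrightarrow> score b U' = score b (U' - D)"
  shows "left_move U x = left_move (U - D) x" and "right_move U x = right_move (U - D) x"
proof -
  let ?N = "cnbhd E U x"
  have N_outside: "?N \<inter> D = {}"
    using x outside_component by (auto simp: cnbhd_def)
  then have N: "cnbhd E (U - D) x = ?N"
    using x by (intro cnbhd_subset_eq) (auto simp: cnbhd_def)
  have "score b (U - ?N) = score b (U - ?N - D)" for b
  proof (rule IH)
    show "U - ?N \<subset> U" using x by (auto simp: cnbhd_def)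
    show "mirror_closed (U - ?N)" using closed N_outside by (rule mirror_closed_Diff_outside)
  qed
  moreover have "U - ?N - D = U - D - ?N" by blast
  ultimately show "left_move U x = left_move (U - D) x" "right_move U x = right_move (U - D) x"
    unfolding left_move_def right_move_def N by simp_all
qed

lemma isolation_free_outside:
  assumes "iso E U = {}"
  shows "iso E (U - D) = {}"
  using assms outside_component unfolding iso_def by blast

lemma score_mirror_isolation_free_bounds:
  assumes fin: "finite U" and closed: "mirror_closed U" and isf: "iso E U = {}"
    and IH: "\<And>U' b. U' \<subset> U \<Longrightarrow> mirror_closed U' \<Longrightarrow> score b U' = score b (U' - D)"
  shows "score True U \<le> score True (U - D)" and "score False (U - D) \<le> score False U"
proof -
  have H: "finite (U - D)" "iso E (U - D) = {}"
    using fin isolation_free_outside[OF isf] by auto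
  note outside = moves_outside_D[OF fin closed _ IH]
  show "score True U \<le> score True (U - D)"
  proof (cases "U = {}")
    case False
    then obtain x where x: "x \<in> U" "c x" "score True U = left_move U x"
      using best_left_move[OF fin isf] by blast
    show ?thesis
    proof (cases "x \<in> D")
      case True
      with x show ?thesis using mirror_left_move_le[OF fin closed isf _ x(2)] IH by simp
    next
      case False
      with x show ?thesis using outside(1) left_move_le_score[OF H] by simp
    qed
  qed simp
  show "score False (U - D) \<le> score False U"
  proof (cases "U = {}")
    case False
    then obtain x where x: "x \<in> U" "\<not> c x" "score False U = right_move U x"
      using best_right_move[OF fin isf] by blast
    show ?thesis
    proof (cases "x \<in> D")
      case True
      with x show ?thesis using mirror_right_move_ge[OF fin closed isf _ x(2)] IH by simp
    next
      case False
      with x show ?thesis using outside(2) score_le_right_move[OF H] by simp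
    qed
  qed simp
qed

lemma score_mirror_isolation_free:
  assumes fin: "finite U" and closed: "mirror_closed U" and isf: "iso E U = {}"
    and IH: "\<And>U' b. U' \<subset> U \<Longrightarrow> mirror_closed U' \<Longrightarrow> score b U' = score b (U' - D)"
  shows "score b U = score b (U - D)"
proof -
  let ?H = "U - D"
  have H: "finite ?H" "iso E ?H = {}"
    using fin isolation_free_outside[OF isf] by auto
  note bounds = score_mirror_isolation_free_bounds[OF fin closed isf IH]
  note outside = moves_outside_D[OF fin closed _ IH]
  \<comment> \<open>When nothing is left outside D, the missing inequalities say that U is not a zugzwang.\<close>
  have left_ge: "score True ?H \<le> score True U"
  proof (cases "?H = {}")
    case True
    show ?thesis using bounds(2) nonzugzwang[OF fin] unfolding True by simp
  next
    case False
    then obtain x where x: "x \<in> ?H" "c x" "score True ?H = left_move ?H x"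
      using best_left_move[OF H] by blast
    then have "score True ?H = left_move U x" using outside(1) by simp
    also have "\<dots> \<le> score True U" using x by (intro left_move_le_score[OF fin isf]) auto
    finally show ?thesis .
  qed
  have right_le: "score False U \<le> score False ?H"
  proof (cases "?H = {}")
    case True
    show ?thesis using bounds(1) nonzugzwang[OF fin] unfolding True by simp
  next
    case False
    then obtain x where x: "x \<in> ?H" "\<not> c x" "score False ?H = right_move ?H x"
      using best_right_move[OF H] by blast
    have "score False U \<le> right_move U x" using x by (intro score_le_right_move[OF fin isf]) auto
    also have "\<dots> = score False ?H" using x outside(2) by simp
    finally show ?thesis .
  qed
  show ?thesis using bounds left_ge right_le by (cases b) simp_all
qed

theorem score_mirror_closed:
  "finite U \<Longrightarrow> mirror_closed U \<Longrightarrow> score b U = score b (U - D)"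
proof (induction U arbitrary: b rule: finite_psubset_induct)
  case (psubset U)
  let ?I = "iso E U"
  have fin_I: "finite ?I" using psubset.hyps(1) iso_subset[of E U] by (rule finite_subset[rotated])
  have "credit c (?I \<inter> D) = 0"
    using iso_mirror[OF psubset.prems] by (intro credit_mirror_invariant) auto
  moreover have "credit c ?I = credit c (?I \<inter> D) + credit c (?I - D)"
    using fin_I credit_Un[of "?I \<inter> D" "?I - D" c] by (simp add: Int_Diff_Un Diff_disjoint Int_assoc)
  ultimately have credit_I: "credit c ?I = credit c (?I - D)" by simp
  have "score b U = credit c (?I - D) + score b (U - ?I)"
    using psubset.hyps(1) credit_I by (simp add: score_Diff_isolated[of U ?I])
  also have "score b (U - ?I) = score b (U - ?I - D)"
  proof (rule score_mirror_isolation_free)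
    show "finite (U - ?I)" using psubset.hyps(1) by blast
    show "mirror_closed (U - ?I)" using psubset.prems by (rule mirror_closed_Diff_iso)
    show "score b' U' = score b' (U' - D)" if "U' \<subset> U - ?I" "mirror_closed U'" for U' b'
      using that psubset.IH by blast
  qed simp
  also have "U - ?I - D = U - D - (?I - D)" by blast
  also have "credit c (?I - D) + score b \<dots> = score b (U - D)"
    using psubset.hyps(1) by (intro score_Diff_isolated[symmetric]) (auto simp: iso_def)
  finally show ?case .
qed

end

section \<open>BW-automorphisms\<close>

lemma dist_ge3_iff:
  assumes "v \<in> V"
  shows "dist_ge3 V E u v \<longleftrightarrow> u \<noteq> v \<and> \<not> E u v \<and> (\<forall>w\<in>V. E u w \<longrightarrow> \<not> E w v)"
  using assms by (auto simp: dist_ge3_def numeral_2_eq_2)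

lemma bipartite_graph_sum:
  assumes G: "bipartite_graph V c E" and H: "bipartite_graph W d F"
  shows "bipartite_graph (sum_V V W) (sum_col c d) (sum_E E F)"
  unfolding bipartite_graph_def
proof (intro conjI ballI)
  show "finite (sum_V V W)" using G H by (simp add: bipartite_graph_def sum_V_def)
  fix u v assume u: "u \<in> sum_V V W" and v: "v \<in> sum_V V W"
  show "sum_E E F u v \<longleftrightarrow> sum_E E F v u"
  proof (cases u; cases v)
    fix a b assume "u = Inl a" "v = Inl b"
    with u v G show ?thesis unfolding bipartite_graph_def sum_V_def by auto
  next
    fix a b assume "u = Inr a" "v = Inr b"
    with u v H show ?thesis unfolding bipartite_graph_def sum_V_def by auto
  qed simp_all
  show "sum_E E F u v \<longrightarrow> sum_col c d u \<noteq> sum_col c d v"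
  proof (cases u; cases v)
    fix a b assume "u = Inl a" "v = Inl b"
    with u v G show ?thesis unfolding bipartite_graph_def sum_V_def sum_col_def by auto
  next
    fix a b assume "u = Inr a" "v = Inr b"
    with u v H show ?thesis unfolding bipartite_graph_def sum_V_def sum_col_def by auto
  qed simp_all
qed

lemma mirror_symmetry_sum:
  assumes G: "bipartite_graph V c E" and \<phi>: "BW_automorphism V c E \<phi>"
    and H: "bipartite_graph W d F"
  shows "mirror_symmetry (sum_col c d) (restrict_edges (sum_V V W) (sum_E E F))
    (Inl ` V) (map_sum \<phi> id)"
proof -
  have sum: "bipartite_influence (sum_col c d) (restrict_edges (sum_V V W) (sum_E E F))"
    using bipartite_graph_sum[OF G H] by (rule bipartite_influence_restrict_edges)
  then interpret bipartite_influence "sum_col c d" "restrict_edges (sum_V V W) (sum_E E F)" .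
  have \<phi>_V: "\<phi> a \<in> V" if "a \<in> V" for a
    using \<phi> that unfolding BW_automorphism_def bij_betw_def by blast
  have \<phi>_props: "\<phi> (\<phi> a) = a" "c (\<phi> a) \<noteq> c a" "dist_ge3 V E a (\<phi> a)"
    "\<And>b. b \<in> V \<Longrightarrow> E (\<phi> a) (\<phi> b) \<longleftrightarrow> E a b" if "a \<in> V" for a
    using \<phi> that unfolding BW_automorphism_def by blast+
  have far: "\<not> E a (\<phi> a)" "\<And>b. b \<in> V \<Longrightarrow> E a b \<Longrightarrow> \<not> E b (\<phi> a)" if "a \<in> V" for a
    using \<phi>_props(3)[OF that] unfolding dist_ge3_iff[OF \<phi>_V[OF that]] by auto
  have edges: "restrict_edges (sum_V V W) (sum_E E F) (Inl a) v \<longleftrightarrow>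
      (\<exists>b\<in>V. v = Inl b \<and> E a b)" if "a \<in> V" for a v
    using that by (cases v) (auto simp: restrict_edges_def sum_V_def)
  show ?thesis
  proof (intro mirror_symmetry.intro[OF sum] mirror_symmetry_axioms.intro)
    fix u v w :: "'a + 'b"
    assume u: "u \<in> Inl ` V"
    then obtain a where a: "a \<in> V" "u = Inl a" by blast
    show "map_sum \<phi> id u \<in> Inl ` V" "map_sum \<phi> id (map_sum \<phi> id u) = u"
      "sum_col c d (map_sum \<phi> id u) \<noteq> sum_col c d u"
      using a \<phi>_V \<phi>_props(1,2) by (auto simp: sum_col_def)
    show "\<not> restrict_edges (sum_V V W) (sum_E E F) u (map_sum \<phi> id u)"
      using a far(1) \<phi>_V by (simp add: edges)
    show "v \<in> Inl ` V" if "restrict_edges (sum_V V W) (sum_E E F) u v"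
      using that a by (auto simp: edges)
    show "\<not> restrict_edges (sum_V V W) (sum_E E F) w (map_sum \<phi> id u)"
      if "restrict_edges (sum_V V W) (sum_E E F) u w"
      using that a far(2) \<phi>_V by (auto simp: edges)
    show "restrict_edges (sum_V V W) (sum_E E F) (map_sum \<phi> id u) (map_sum \<phi> id v) \<longleftrightarrow>
        restrict_edges (sum_V V W) (sum_E E F) u v" if "v \<in> Inl ` V"
      using that a \<phi>_V \<phi>_props(4) by (auto simp: edges)
  qed
qed

lemma infl_sum_BW_automorphism:
  assumes G: "bipartite_graph V c E" and \<phi>: "BW_automorphism V c E \<phi>"
    and H: "bipartite_graph W d F"
  shows "infl (card (sum_V V W)) b (sum_col c d) (sum_E E F) (sum_V V W) = infl (card W) b d F W"
proof -
  interpret mirror_symmetry "sum_col c d" "restrict_edges (sum_V V W) (sum_E E F)"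
    "Inl ` V" "map_sum \<phi> id"
    using G \<phi> H by (rule mirror_symmetry_sum)
  have "finite (sum_V V W)"
    using G H by (simp add: bipartite_graph_def sum_V_def)
  moreover have "mirror_closed (sum_V V W)"
    using \<phi> unfolding mirror_closed_def BW_automorphism_def bij_betw_def sum_V_def by auto
  ultimately have "score b (sum_V V W) = score b (sum_V V W - Inl ` V)"
    by (rule score_mirror_closed)
  also have "sum_V V W - Inl ` V = Inr ` W" by (auto simp: sum_V_def)
  finally have "score b (sum_V V W) = score b (Inr ` W)" .
  moreover have "score b (Inr ` W) = infl (card W) b d F W"
    unfolding score_def
    by (simp add: card_image infl_image restrict_edges_def sum_V_def sum_col_def)
  ultimately show ?thesis
    by (simp add: score_def infl_restrict_edges)
qed

lemma infl_BW_automorphism_eq_0: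
  assumes "bipartite_graph V c E" "BW_automorphism V c E \<phi>"
  shows "infl (card V) b c E V = 0"
proof -
  have "infl (card V) b c E V
      = infl (card (sum_V V ({} :: 'a set))) b (sum_col c c) (sum_E E E) (sum_V V {})"
    using infl_image[of Inl V "sum_col c c" c "sum_E E E" E "card V" b]
    by (simp add: sum_V_def sum_col_def card_image)
  also have "\<dots> = infl (card ({} :: 'a set)) b c E {}"
    by (rule infl_sum_BW_automorphism[OF assms]) (simp add: bipartite_graph_def)
  finally show ?thesis by (simp add: iso_def)
qed

theorem mainTheorem10:
  fixes V :: "'a set" and c :: "'a \<Rightarrow> bool" and E :: "'a \<Rightarrow> 'a \<Rightarrow> bool"
    and \<phi> :: "'a \<Rightarrow> 'a"
  assumes "bipartite_graph V c E"
    and "BW_automorphism V c E \<phi>"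
  shows "(\<forall>(W :: 'b set) d F. bipartite_graph W d F \<longrightarrow>
            Ls (sum_V V W) (sum_col c d) (sum_E E F) = Ls W d F \<and>
            Rs (sum_V V W) (sum_col c d) (sum_E E F) = Rs W d F)
         \<and> Ls V c E = 0 \<and> Rs V c E = 0"
  using infl_sum_BW_automorphism[OF assms] infl_BW_automorphism_eq_0[OF assms]
  unfolding Ls_def Rs_def by blast

end
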